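(* Let $\lambda\in\mathfrak h_{\bar 0}^*\setminus\Lambda_{\mathbb Z}$. Then $\mathrm{sch}\,L(\lambda)=0$.
   Context: Let $\mathfrak g=\mathfrak q(n)$ be the queer Lie superalgebra with Cartan subalgebra $\mathfrak h=\mathfrak h_{\bar 0}\oplus\mathfrak h_{\bar 1}$, and $\{\delta_i\}$ the basis of $\mathfrak h_{\bar 0}^*$ dual to the diagonal matrix units. $\Lambda_{\mathbb Z}=\{\sum_i\lambda_i\delta_i\mid\lambda_i\in\mathbb Z\}$ is the set of integer weights. $L(\lambda)$ is the irreducible highest weight module (with respect to the standard Borel subalgebra) of highest weight $\lambda$, and $\mathrm{sch}\,M=\sum_\mu(\dim M_{\mu,\bar 0}-\dim M_{\mu,\bar 1})e^\mu$. *)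

theory Defs
  imports Complex_Main
begin

text \<open>Elements of the queer Lie superalgebra q(n) are block matrices [[A,B],[B,A]];
  the even part consists of the matrices A (acting as [[A,0],[0,A]]), the odd part of the
  matrices B (acting as [[0,B],[B,0]]). n x n complex matrices are indexed by a finite
  linearly ordered type 'n (the linear order fixes the standard Borel subalgebra).\<close>

type_synonym 'n qmat = "'n \<Rightarrow> 'n \<Rightarrow> complex"

definition mmul :: "'n::finite qmat \<Rightarrow> 'n qmat \<Rightarrow> 'n qmat" where
  "mmul A B = (\<lambda>i j. \<Sum>k\<in>UNIV. A i k * B k j)"

definition mcomm :: "'n::finite qmat \<Rightarrow> 'n qmat \<Rightarrow> 'n qmat" where
  "mcomm A B = (\<lambda>i j. mmul A B i j - mmul B A i j)"

definition manti :: "'n::finite qmat \<Rightarrow> 'n qmat \<Rightarrow> 'n qmat" where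
  "manti A B = (\<lambda>i j. mmul A B i j + mmul B A i j)"

definition munit :: "'n \<Rightarrow> 'n \<Rightarrow> 'n qmat" where
  "munit i j = (\<lambda>a b. if a = i \<and> b = j then 1 else 0)"

text \<open>A q(n)-supermodule: a complex vector space (scalar multiplication sc) with a
  Z/2-grading V0 (+) V1, an even-part action r0 and an odd-part action r1, satisfying the
  super bracket relations of q(n):
  [A,A'] = AA'-A'A (even,even), [A,B] = AB-BA (even,odd), [B,B'] = BB'+B'B (odd,odd).\<close>

definition q_supermodule ::
  "(complex \<Rightarrow> 'v::ab_group_add \<Rightarrow> 'v) \<Rightarrow> 'v set \<Rightarrow> 'v set \<Rightarrow>
   ('n::finite qmat \<Rightarrow> 'v \<Rightarrow> 'v) \<Rightarrow> ('n qmat \<Rightarrow> 'v \<Rightarrow> 'v) \<Rightarrow> bool" where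
  "q_supermodule sc V0 V1 r0 r1 \<longleftrightarrow>
     vector_space sc \<and> module.subspace sc V0 \<and> module.subspace sc V1 \<and>
     V0 \<inter> V1 = {0} \<and> (\<forall>v. \<exists>a\<in>V0. \<exists>b\<in>V1. v = a + b) \<and>
     (\<forall>A. Vector_Spaces.linear sc sc (r0 A)) \<and> (\<forall>A. Vector_Spaces.linear sc sc (r1 A)) \<and>
     (\<forall>A B v. r0 (\<lambda>i j. A i j + B i j) v = r0 A v + r0 B v) \<and>
     (\<forall>A B v. r1 (\<lambda>i j. A i j + B i j) v = r1 A v + r1 B v) \<and>
     (\<forall>c A v. r0 (\<lambda>i j. c * A i j) v = sc c (r0 A v)) \<and>
     (\<forall>c A v. r1 (\<lambda>i j. c * A i j) v = sc c (r1 A v)) \<and>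
     (\<forall>A. r0 A ` V0 \<subseteq> V0 \<and> r0 A ` V1 \<subseteq> V1 \<and> r1 A ` V0 \<subseteq> V1 \<and> r1 A ` V1 \<subseteq> V0) \<and>
     (\<forall>A B v. r0 (mcomm A B) v = r0 A (r0 B v) - r0 B (r0 A v)) \<and>
     (\<forall>A B v. r1 (mcomm A B) v = r0 A (r1 B v) - r1 B (r0 A v)) \<and>
     (\<forall>A B v. r0 (manti A B) v = r1 A (r1 B v) + r1 B (r1 A v))"

definition graded_submodule ::
  "(complex \<Rightarrow> 'v::ab_group_add \<Rightarrow> 'v) \<Rightarrow> 'v set \<Rightarrow> 'v set \<Rightarrow>
   ('n::finite qmat \<Rightarrow> 'v \<Rightarrow> 'v) \<Rightarrow> ('n qmat \<Rightarrow> 'v \<Rightarrow> 'v) \<Rightarrow> 'v set \<Rightarrow> bool" where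
  "graded_submodule sc V0 V1 r0 r1 W \<longleftrightarrow>
     module.subspace sc W \<and> (\<forall>w\<in>W. \<exists>a\<in>V0 \<inter> W. \<exists>b\<in>V1 \<inter> W. w = a + b) \<and>
     (\<forall>A. r0 A ` W \<subseteq> W \<and> r1 A ` W \<subseteq> W)"

definition simple_supermodule ::
  "(complex \<Rightarrow> 'v::ab_group_add \<Rightarrow> 'v) \<Rightarrow> 'v set \<Rightarrow> 'v set \<Rightarrow>
   ('n::finite qmat \<Rightarrow> 'v \<Rightarrow> 'v) \<Rightarrow> ('n qmat \<Rightarrow> 'v \<Rightarrow> 'v) \<Rightarrow> bool" where
  "simple_supermodule sc V0 V1 r0 r1 \<longleftrightarrow>
     q_supermodule sc V0 V1 r0 r1 \<and> (\<exists>v::'v. v \<noteq> 0) \<and>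
     (\<forall>W. graded_submodule sc V0 V1 r0 r1 W \<longrightarrow> W = {0} \<or> W = UNIV)"

text \<open>Weight space M_mu for mu in h0^*, mu = sum_i mu i delta_i.\<close>

definition weight_space ::
  "(complex \<Rightarrow> 'v \<Rightarrow> 'v) \<Rightarrow> ('n qmat \<Rightarrow> 'v \<Rightarrow> 'v) \<Rightarrow> ('n \<Rightarrow> complex) \<Rightarrow> 'v set" where
  "weight_space sc r0 mu = {v. \<forall>i. r0 (munit i i) v = sc (mu i) v}"

text \<open>Coefficient of e^mu in the supercharacter: dim M_{mu,0} - dim M_{mu,1}.\<close>

definition sch ::
  "(complex \<Rightarrow> 'v::ab_group_add \<Rightarrow> 'v) \<Rightarrow> 'v set \<Rightarrow> 'v set \<Rightarrow>
   ('n qmat \<Rightarrow> 'v \<Rightarrow> 'v) \<Rightarrow> ('n \<Rightarrow> complex) \<Rightarrow> int" where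
  "sch sc V0 V1 r0 mu =
     int (vector_space.dim sc (weight_space sc r0 mu \<inter> V0))
     - int (vector_space.dim sc (weight_space sc r0 mu \<inter> V1))"

definition highest_weight_vector ::
  "(complex \<Rightarrow> 'v::ab_group_add \<Rightarrow> 'v) \<Rightarrow> 'v set \<Rightarrow> 'v set \<Rightarrow>
   ('n::{finite,linorder} qmat \<Rightarrow> 'v \<Rightarrow> 'v) \<Rightarrow> ('n qmat \<Rightarrow> 'v \<Rightarrow> 'v) \<Rightarrow>
   ('n \<Rightarrow> complex) \<Rightarrow> 'v \<Rightarrow> bool" where
  "highest_weight_vector sc V0 V1 r0 r1 lam v \<longleftrightarrow>
     v \<noteq> 0 \<and> (v \<in> V0 \<or> v \<in> V1) \<and> v \<in> weight_space sc r0 lam \<and>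
     (\<forall>i j. i < j \<longrightarrow> r0 (munit i j) v = 0 \<and> r1 (munit i j) v = 0)"

end

theory Submission
  imports Defs
begin

text \<open>Pick i with lam i not an integer and let X be the action of the even diagonal unit E_ii.
  Since ad X has integer eigenvalues on q(n), the sum of the generalised eigenspaces of X for
  integer eigenvalues is a graded submodule; it misses the highest weight vector, so it is zero by
  simplicity. Hence every weight mu with a nonzero weight space has mu i \<notin> \<int>, in particular
  mu i \<noteq> 0. The odd diagonal element r1 E_ii squares to mu i on the weight space of mu, so it
  maps the even part of that weight space isomorphically onto the odd part.\<close>

lemma (in vector_space_pair) dim_image_eq_inj_on_span:
  assumes lf: "Vector_Spaces.linear s1 s2 f"
    and fi: "inj_on f (vs1.span S)"
  shows "vs2.dim (f ` S) = vs1.dim S"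
proof -
  interpret lf: Vector_Spaces.linear s1 s2 f by fact
  obtain B where B: "B \<subseteq> S" "vs1.independent B" "S \<subseteq> vs1.span B" "card B = vs1.dim S"
    using vs1.basis_exists[of S] by auto
  then have "vs1.span S = vs1.span B"
    using vs1.span_mono[of B S] vs1.span_mono[of S "vs1.span B"] vs1.span_span[of B] by auto
  then show ?thesis
    by (metis B(2) B(4) fi lf.dependent_inj_imageD lf.span_image vs2.dim_eq_card_independent
        vs2.dim_span card_image inj_on_subset vs1.span_superset)
qed

lemma (in vector_space) dim_subset_zero:
  assumes "S \<subseteq> {0}"
  shows "dim S = 0"
proof -
  have "span S = span {}"
    using assms by (metis span_insert_0 subset_singletonD)
  then have "dim S = dim ({} :: 'b set)"
    by (metis dim_span)
  also have "\<dots> = 0"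
    using dim_eq_card_independent[OF independent_empty] by simp
  finally show ?thesis .
qed

primrec root_poly_apply ::
  "('a::field \<Rightarrow> 'v::ab_group_add \<Rightarrow> 'v) \<Rightarrow> ('v \<Rightarrow> 'v) \<Rightarrow> 'a list \<Rightarrow> 'v \<Rightarrow> 'v" where
  "root_poly_apply sc X [] w = w"
| "root_poly_apply sc X (s # ss) w = X (root_poly_apply sc X ss w) - sc s (root_poly_apply sc X ss w)"

definition int_gen_eigenspaces ::
  "('a::field \<Rightarrow> 'v::ab_group_add \<Rightarrow> 'v) \<Rightarrow> ('v \<Rightarrow> 'v) \<Rightarrow> 'v set" where
  "int_gen_eigenspaces sc X = {w. \<exists>ss. set ss \<subseteq> \<int> \<and> root_poly_apply sc X ss w = 0}"

lemma root_poly_apply_append: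
  "root_poly_apply sc X (ss @ tt) w = root_poly_apply sc X ss (root_poly_apply sc X tt w)"
  by (induction ss) auto

context vector_space
begin

context
  fixes X :: "'b \<Rightarrow> 'b"
  assumes linear_X: "Vector_Spaces.linear scale scale X"
begin

interpretation X: Vector_Spaces.linear scale scale X by (fact linear_X)

lemma linear_root_poly_apply: "Vector_Spaces.linear scale scale (root_poly_apply scale X ss)"
proof (induction ss)
  case Nil
  show ?case by (simp add: linear_ident)
next
  case (Cons s ss)
  interpret P: Vector_Spaces.linear scale scale "root_poly_apply scale X ss" by fact
  show ?case
    by (auto simp add: Vector_Spaces.linear_iff X.add X.scale P.add P.scale vector_space_axioms
        scale_right_distrib scale_right_diff_distrib scale_left_commute)
qed

lemma root_poly_apply_commute:
  "root_poly_apply scale X tt (root_poly_apply scale X ss w) =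
   root_poly_apply scale X ss (root_poly_apply scale X tt w)"
proof (induction ss)
  case Nil
  show ?case by simp
next
  case (Cons s ss)
  interpret P: Vector_Spaces.linear scale scale "root_poly_apply scale X tt"
    by (fact linear_root_poly_apply)
  have "root_poly_apply scale X tt (X w) = X (root_poly_apply scale X tt w)" for w
    by (induction tt) (simp_all add: X.diff X.scale)
  with Cons show ?case by (simp add: P.diff P.scale)
qed

lemma root_poly_apply_shift:
  assumes R: "Vector_Spaces.linear scale scale R"
    and XR: "\<And>w. X (R w) = R (X w) + c *s R w"
  shows "root_poly_apply scale X (map (\<lambda>s. s + c) ss) (R w) = R (root_poly_apply scale X ss w)"
proof (induction ss)
  case Nil
  show ?case by simp
next
  case (Cons s ss)
  interpret R: Vector_Spaces.linear scale scale R by (fact R)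
  show ?case using Cons by (simp add: R.diff R.scale XR scale_left_distrib algebra_simps)
qed

lemma root_poly_apply_eigenvector:
  assumes "X v = l *s v"
  shows "root_poly_apply scale X ss v = (\<Prod>s\<leftarrow>ss. l - s) *s v"
  by (induction ss) (simp_all add: X.scale assms scale_left_diff_distrib algebra_simps)

lemma root_poly_apply_in_subspace:
  assumes "subspace S" "X ` S \<subseteq> S" "w \<in> S"
  shows "root_poly_apply scale X ss w \<in> S"
  by (induction ss) (use assms in \<open>auto intro!: subspace_diff subspace_scale\<close>)

lemma subspace_int_gen_eigenspaces: "subspace (int_gen_eigenspaces scale X)"
  unfolding subspace_def
proof (intro conjI ballI allI)
  show "0 \<in> int_gen_eigenspaces scale X"
    unfolding int_gen_eigenspaces_def by (auto intro: exI[of _ "[]"])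
next
  fix x y assume "x \<in> int_gen_eigenspaces scale X" "y \<in> int_gen_eigenspaces scale X"
  then obtain ss tt where ss: "set ss \<subseteq> \<int>" "root_poly_apply scale X ss x = 0"
    and tt: "set tt \<subseteq> \<int>" "root_poly_apply scale X tt y = 0"
    unfolding int_gen_eigenspaces_def by blast
  interpret P: Vector_Spaces.linear scale scale "root_poly_apply scale X ss"
    by (fact linear_root_poly_apply)
  have "root_poly_apply scale X (tt @ ss) (x + y) = 0"
    using root_poly_apply_commute[of tt ss y]
    by (simp add: root_poly_apply_append P.add ss tt P.zero)
  with ss tt show "x + y \<in> int_gen_eigenspaces scale X"
    unfolding int_gen_eigenspaces_def by (auto intro!: exI[of _ "tt @ ss"])
next
  fix c x assume "x \<in> int_gen_eigenspaces scale X"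
  then obtain ss where ss: "set ss \<subseteq> \<int>" "root_poly_apply scale X ss x = 0"
    unfolding int_gen_eigenspaces_def by blast
  interpret P: Vector_Spaces.linear scale scale "root_poly_apply scale X ss"
    by (fact linear_root_poly_apply)
  show "c *s x \<in> int_gen_eigenspaces scale X"
    unfolding int_gen_eigenspaces_def using ss by (auto simp: P.scale)
qed

lemma int_gen_eigenspaces_shift_closed:
  assumes R: "Vector_Spaces.linear scale scale R"
    and XR: "\<And>w. X (R w) = R (X w) + c *s R w" and c: "c \<in> \<int>"
    and w: "w \<in> int_gen_eigenspaces scale X"
  shows "R w \<in> int_gen_eigenspaces scale X"
proof -
  obtain ss where ss: "set ss \<subseteq> \<int>" "root_poly_apply scale X ss w = 0"
    using w unfolding int_gen_eigenspaces_def by blast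
  interpret R: Vector_Spaces.linear scale scale R by (fact R)
  have "root_poly_apply scale X (map (\<lambda>s. s + c) ss) (R w) = 0"
    by (simp add: root_poly_apply_shift[OF R XR] ss R.zero)
  moreover have "set (map (\<lambda>s. s + c) ss) \<subseteq> \<int>"
    using ss c by auto
  ultimately show ?thesis
    unfolding int_gen_eigenspaces_def by blast
qed

lemma eigenvector_in_int_gen_eigenspaces:
  assumes "X w = m *s w" "m \<in> \<int>"
  shows "w \<in> int_gen_eigenspaces scale X"
  using assms unfolding int_gen_eigenspaces_def by (auto intro!: exI[of _ "[m]"])

lemma eigenvector_notin_int_gen_eigenspaces:
  assumes "X v = l *s v" "l \<notin> \<int>" "v \<noteq> 0"
  shows "v \<notin> int_gen_eigenspaces scale X"
proof
  assume "v \<in> int_gen_eigenspaces scale X"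
  then obtain ss where ss: "set ss \<subseteq> \<int>" "root_poly_apply scale X ss v = 0"
    unfolding int_gen_eigenspaces_def by blast
  have "(\<Prod>s\<leftarrow>ss. l - s) \<noteq> 0"
    using ss(1) assms(2) by (auto simp: prod_list_zero_iff)
  then show False
    using ss(2) root_poly_apply_eigenvector[OF assms(1)] assms(3) by simp
qed

end

end

lemma mcomm_diag_munit:
  "mcomm (munit i i) (munit a b) =
     (\<lambda>x y. ((if i = a then 1 else 0) - (if i = b then 1 else 0)) * munit a b x y)"
  by (auto simp: mcomm_def mmul_def munit_def fun_eq_iff if_distrib[of "\<lambda>z. z * _"] sum.delta
      cong: if_cong)

lemma manti_diag_munit: "manti (munit i i) (munit i i) = (\<lambda>x y. 2 * munit i i x y)"
  by (auto simp: manti_def mmul_def munit_def fun_eq_iff if_distrib[of "\<lambda>z. z * _"] sum.delta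
      cong: if_cong)

lemma qmat_munit_expansion:
  "(A :: 'n::finite qmat) = (\<lambda>x y. \<Sum>(a, b)\<in>UNIV. A a b * munit a b x y)"
proof (intro ext)
  fix x y
  have "(\<Sum>(a, b)\<in>UNIV. A a b * munit a b x y) = (\<Sum>p\<in>UNIV. if p = (x, y) then A x y else 0)"
    by (rule sum.cong) (auto simp: munit_def split: if_splits)
  then show "A x y = (\<Sum>(a, b)\<in>UNIV. A a b * munit a b x y)"
    by simp
qed

lemma action_munit_expansion:
  fixes sc :: "complex \<Rightarrow> 'v::ab_group_add \<Rightarrow> 'v" and \<rho> :: "'n::finite qmat \<Rightarrow> 'v \<Rightarrow> 'v"
  assumes "vector_space sc"
    and add: "\<And>A B v. \<rho> (\<lambda>i j. A i j + B i j) v = \<rho> A v + \<rho> B v"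
    and scale: "\<And>c A v. \<rho> (\<lambda>i j. c * A i j) v = sc c (\<rho> A v)"
  shows "\<rho> A v = (\<Sum>(a, b)\<in>UNIV. sc (A a b) (\<rho> (munit a b) v))"
proof -
  interpret vector_space sc by fact
  have zero: "\<rho> (\<lambda>i j. 0) v = 0"
    using scale[of 0 "\<lambda>i j. 0" v] by simp
  have "\<rho> (\<lambda>x y. \<Sum>p\<in>F. f p x y) v = (\<Sum>p\<in>F. \<rho> (f p) v)" if "finite F" for F f
    using that by (induction F rule: finite_induct) (simp_all add: zero add)
  from this[of UNIV "\<lambda>(a, b) x y. A a b * munit a b x y"] show ?thesis
    by (subst qmat_munit_expansion) (simp add: case_prod_unfold scale)
qed

locale q_super_module =
  fixes sc :: "complex \<Rightarrow> 'v::ab_group_add \<Rightarrow> 'v"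
    and V0 V1 :: "'v set"
    and r0 r1 :: "'n::finite qmat \<Rightarrow> 'v \<Rightarrow> 'v"
  assumes q_supermodule: "q_supermodule sc V0 V1 r0 r1"
begin

sublocale vector_space sc
  using q_supermodule by (simp add: q_supermodule_def)

lemma
  shows subspace_V0: "subspace V0"
    and subspace_V1: "subspace V1"
    and V0_Int_V1: "V0 \<inter> V1 = {0}"
    and grading: "\<exists>a\<in>V0. \<exists>b\<in>V1. v = a + b"
    and linear_r0: "Vector_Spaces.linear sc sc (r0 A)"
    and linear_r1: "Vector_Spaces.linear sc sc (r1 A)"
    and r0_add_mat: "r0 (\<lambda>i j. A i j + B i j) v = r0 A v + r0 B v"
    and r1_add_mat: "r1 (\<lambda>i j. A i j + B i j) v = r1 A v + r1 B v"
    and r0_scale_mat: "r0 (\<lambda>i j. c * A i j) v = sc c (r0 A v)"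
    and r1_scale_mat: "r1 (\<lambda>i j. c * A i j) v = sc c (r1 A v)"
    and r0_parity: "r0 A ` V0 \<subseteq> V0" "r0 A ` V1 \<subseteq> V1"
    and r1_parity: "r1 A ` V0 \<subseteq> V1" "r1 A ` V1 \<subseteq> V0"
    and r0_mcomm: "r0 (mcomm A B) v = r0 A (r0 B v) - r0 B (r0 A v)"
    and r1_mcomm: "r1 (mcomm A B) v = r0 A (r1 B v) - r1 B (r0 A v)"
    and r0_manti: "r0 (manti A B) v = r1 A (r1 B v) + r1 B (r1 A v)"
  using q_supermodule unfolding q_supermodule_def by simp_all

lemma r0_diag_commute_r0:
  "r0 (munit i i) (r0 (munit a b) w) =
     r0 (munit a b) (r0 (munit i i) w)
     + sc ((if i = a then 1 else 0) - (if i = b then 1 else 0)) (r0 (munit a b) w)"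
  using r0_mcomm[of "munit i i" "munit a b" w]
  by (simp add: mcomm_diag_munit r0_scale_mat diff_eq_eq)

lemma r0_diag_commute_r1:
  "r0 (munit i i) (r1 (munit a b) w) =
     r1 (munit a b) (r0 (munit i i) w)
     + sc ((if i = a then 1 else 0) - (if i = b then 1 else 0)) (r1 (munit a b) w)"
  using r1_mcomm[of "munit i i" "munit a b" w]
  by (simp add: mcomm_diag_munit r1_scale_mat diff_eq_eq)

lemma graded_submodule_int_gen_eigenspaces:
  "graded_submodule sc V0 V1 r0 r1 (int_gen_eigenspaces sc (r0 (munit i i)))"
  (is "graded_submodule sc V0 V1 r0 r1 ?K")
proof -
  let ?X = "r0 (munit i i)"
  have K: "subspace ?K"
    by (rule subspace_int_gen_eigenspaces[OF linear_r0])
  have unit_closed: "\<rho> (munit a b) w \<in> ?K" if \<rho>: "\<rho> = r0 \<or> \<rho> = r1" and w: "w \<in> ?K" for \<rho> a b w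
  proof (rule int_gen_eigenspaces_shift_closed[OF linear_r0 _ _ _ w])
    show "Vector_Spaces.linear sc sc (\<rho> (munit a b))"
      using \<rho> linear_r0 linear_r1 by blast
    show "?X (\<rho> (munit a b) u) = \<rho> (munit a b) (?X u)
        + sc ((if i = a then 1 else 0) - (if i = b then 1 else 0)) (\<rho> (munit a b) u)" for u
      using \<rho> r0_diag_commute_r0 r0_diag_commute_r1 by blast
  qed simp
  have closed: "\<rho> A w \<in> ?K" if "\<rho> = r0 \<or> \<rho> = r1" "w \<in> ?K" for \<rho> A w
  proof -
    have "\<rho> A w = (\<Sum>(a, b)\<in>UNIV. sc (A a b) (\<rho> (munit a b) w))"
      using that(1) by (intro action_munit_expansion) (auto simp: r0_add_mat r1_add_mat
          r0_scale_mat r1_scale_mat vector_space_axioms)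
    also have "\<dots> \<in> ?K"
      using unit_closed[OF that] by (auto intro!: subspace_sum[OF K] subspace_scale[OF K])
    finally show ?thesis .
  qed
  have homogeneous: "\<exists>a\<in>V0 \<inter> ?K. \<exists>b\<in>V1 \<inter> ?K. w = a + b" if w: "w \<in> ?K" for w
  proof -
    obtain ss where ss: "set ss \<subseteq> \<int>" "root_poly_apply sc ?X ss w = 0"
      using w unfolding int_gen_eigenspaces_def by blast
    obtain a b where ab: "a \<in> V0" "b \<in> V1" "w = a + b"
      using grading by blast
    interpret P: Vector_Spaces.linear sc sc "root_poly_apply sc ?X ss"
      by (rule linear_root_poly_apply[OF linear_r0])
    have "root_poly_apply sc ?X ss a \<in> V0" "root_poly_apply sc ?X ss b \<in> V1"
      using ab r0_parity
      by (blast intro: root_poly_apply_in_subspace linear_r0 subspace_V0 subspace_V1)+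
    moreover have "root_poly_apply sc ?X ss a = - root_poly_apply sc ?X ss b"
      using ss(2) ab(3) by (simp add: P.add eq_neg_iff_add_eq_0)
    ultimately have "root_poly_apply sc ?X ss a \<in> V0 \<inter> V1"
      using subspace_neg[OF subspace_V1] by auto
    then have "root_poly_apply sc ?X ss a = 0" "root_poly_apply sc ?X ss b = 0"
      using V0_Int_V1 \<open>root_poly_apply sc ?X ss a = - root_poly_apply sc ?X ss b\<close> by auto
    with ss(1) ab show ?thesis
      unfolding int_gen_eigenspaces_def by blast
  qed
  show ?thesis
    unfolding graded_submodule_def using K closed homogeneous by blast
qed

lemma subspace_weight_space: "subspace (weight_space sc r0 mu)"
proof -
  have "r0 A 0 = 0" "r0 A (x + y) = r0 A x + r0 A y" "r0 A (sc c x) = sc c (r0 A x)" for A x y c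
    using linear_r0[of A] unfolding Vector_Spaces.linear_iff by (metis scale_zero_left)+
  then show ?thesis
    unfolding weight_space_def subspace_def by (simp add: scale_right_distrib scale_left_commute)
qed

lemma odd_diag_weight_space:
  assumes "w \<in> weight_space sc r0 mu"
  shows "r1 (munit i i) w \<in> weight_space sc r0 mu"
  using assms r0_diag_commute_r1[of _ i i w] linear_r1[of "munit i i"]
  unfolding weight_space_def Vector_Spaces.linear_iff by simp

lemma odd_diag_square:
  assumes "w \<in> weight_space sc r0 mu"
  shows "r1 (munit i i) (r1 (munit i i) w) = sc (mu i) w"
proof -
  have "sc 2 (r1 (munit i i) (r1 (munit i i) w)) = r0 (\<lambda>x y. 2 * munit i i x y) w"
    using r0_manti[of "munit i i" "munit i i" w]
    by (simp add: manti_diag_munit scale_left_distrib[of 1 1, simplified])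
  also have "\<dots> = sc 2 (sc (mu i) w)"
    using assms unfolding r0_scale_mat weight_space_def by simp
  finally show ?thesis
    by (simp only: scale_cancel_left) simp
qed

lemma sch_eq_0_if_weight_nonzero:
  assumes "mu i \<noteq> 0"
  shows "sch sc V0 V1 r0 mu = 0"
proof -
  let ?W = "weight_space sc r0 mu" and ?T = "r1 (munit i i)"
  have onto: "?T ` (?W \<inter> V0) = ?W \<inter> V1"
  proof
    show "?T ` (?W \<inter> V0) \<subseteq> ?W \<inter> V1"
      using odd_diag_weight_space r1_parity by blast
    show "?W \<inter> V1 \<subseteq> ?T ` (?W \<inter> V0)"
    proof
      fix y assume y: "y \<in> ?W \<inter> V1"
      let ?x = "sc (1 / mu i) (?T y)"
      have "?x \<in> ?W \<inter> V0"
        using y odd_diag_weight_space r1_parity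
        by (blast intro: subspace_scale[OF subspace_weight_space] subspace_scale[OF subspace_V0])
      moreover have "?T ?x = y"
        using y odd_diag_square[of y mu i] assms linear_r1[of "munit i i"]
        by (simp add: Vector_Spaces.linear_iff)
      ultimately show "y \<in> ?T ` (?W \<inter> V0)"
        by (metis image_eqI)
    qed
  qed
  have "inj_on ?T (?W \<inter> V0)"
  proof (rule inj_onI)
    fix x y assume "x \<in> ?W \<inter> V0" "y \<in> ?W \<inter> V0" "?T x = ?T y"
    then have "sc (mu i) x = sc (mu i) y"
      using odd_diag_square by (metis IntD1)
    then show "x = y"
      using assms by simp
  qed
  moreover have "span (?W \<inter> V0) = ?W \<inter> V0"
    by (simp add: subspace_inter subspace_weight_space subspace_V0)
  ultimately have "dim (?W \<inter> V1) = dim (?W \<inter> V0)"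
    using vector_space_pair.dim_image_eq_inj_on_span[OF _ linear_r1] onto
    by (metis vector_space_axioms vector_space_pair.intro)
  then show ?thesis
    by (simp add: sch_def)
qed

lemma weight_space_subset_int_gen_eigenspaces:
  assumes "mu i \<in> \<int>"
  shows "weight_space sc r0 mu \<subseteq> int_gen_eigenspaces sc (r0 (munit i i))"
  using assms linear_r0 eigenvector_in_int_gen_eigenspaces unfolding weight_space_def by blast

end

theorem corollary3p3:
  fixes sc :: "complex \<Rightarrow> 'v::ab_group_add \<Rightarrow> 'v"
    and V0 V1 :: "'v set"
    and r0 r1 :: "'n::{finite,linorder} qmat \<Rightarrow> 'v \<Rightarrow> 'v"
    and lam :: "'n \<Rightarrow> complex"
  assumes "simple_supermodule sc V0 V1 r0 r1"
    and "\<exists>v. highest_weight_vector sc V0 V1 r0 r1 lam v"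
    and "\<not> (\<forall>i. lam i \<in> \<int>)"
  shows "\<forall>mu. sch sc V0 V1 r0 mu = 0"
proof
  fix mu :: "'n \<Rightarrow> complex"
  interpret q_super_module sc V0 V1 r0 r1
    using assms(1) by (simp add: simple_supermodule_def q_super_module_def)
  obtain i where i: "lam i \<notin> \<int>"
    using assms(3) by blast
  obtain v where v: "v \<noteq> 0" "v \<in> weight_space sc r0 lam"
    using assms(2) unfolding highest_weight_vector_def by blast
  have "v \<notin> int_gen_eigenspaces sc (r0 (munit i i))"
    using v i linear_r0 eigenvector_notin_int_gen_eigenspaces unfolding weight_space_def by blast
  then have K: "int_gen_eigenspaces sc (r0 (munit i i)) = {0}"
    using assms(1) graded_submodule_int_gen_eigenspaces unfolding simple_supermodule_def by blast
  consider "mu i \<in> \<int>" | "mu i \<noteq> 0"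
    by force
  then show "sch sc V0 V1 r0 mu = 0"
  proof cases
    case 1
    then have "weight_space sc r0 mu \<inter> V0 \<subseteq> {0}" "weight_space sc r0 mu \<inter> V1 \<subseteq> {0}"
      using weight_space_subset_int_gen_eigenspaces K by blast+
    then show ?thesis
      by (simp add: sch_def dim_subset_zero)
  next
    case 2
    then show ?thesis
      by (rule sch_eq_0_if_weight_nonzero)
  qed
qed

end
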